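(* Let $P=\bigotimes_{i=1}^n P_i$, $Q=\bigotimes_{i=1}^nQ_i$ be product distributions on $[q]^n$ with $P\ne Q$, $\mathcal C$ a coordinate-wise greedy coupling, $\pi(\omega)=\Pr_{\mathcal C}[X=\omega\mid X\ne Y]$, and $f$ the estimator defined below. Then $$\mathbb E_{\omega\sim\pi}f(\omega)=\frac{d_{TV}(P,Q)}{\Pr_{\mathcal C}[X\ne Y]}=\frac{d_{TV}(P,Q)}{1-\prod_{i=1}^n(1-d_{TV}(P_i,Q_i))},$$ $$\frac1n\le \mathbb E_{\omega\sim\pi}f(\omega)\le 1,$$ and $0\le f(\omega)\le 1$ for every $\omega\in[q]^n$ with $\pi(\omega)>0$.
   Context: $d_{TV}(P,Q)=\frac12\sum_{\omega}|P(\omega)-Q(\omega)|$ (equivalently, the minimum of $\Pr[X\ne Y]$ over all couplings of $P$ and $Q$). A coordinate-wise greedy coupling $\mathcal C$ is a distribution on pairs $(X,Y)$ of the form $\mathcal C=\mathcal C_1\otimes\cdots\otimes\mathcal C_n$, where each $\mathcal C_i$ is a coupling of $P_i$ and $Q_i$ with $\Pr_{\mathcal C_i}[X_i=Y_i=c]=\min\{P_i(c),Q_i(c)\}$ for all $c\in[q]$. The estimator is defined, for $\omega$ with $\Pr_{\mathcal C}[X=\omega\wedge X\ne Y]>0$ (equivalently $\pi(\omega)>0$), by $$f(\omega)=\frac{\max\{0,P(\omega)-Q(\omega)\}}{\Pr_{\mathcal C}[X=\omega\wedge X\neq Y]}.$$ *)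

theory Defs
  imports Main "HOL-Library.FuncSet" Complex_Main
begin

text \<open>The alphabet is [q] = {0..<q}; a point of [q]^n is an extensional
function in PiE {..<n} (\<lambda>_. {..<q}).  Distributions are given by their
probability mass functions.\<close>

definition cube :: "nat \<Rightarrow> nat \<Rightarrow> (nat \<Rightarrow> nat) set" where
  "cube q n = PiE {..<n} (\<lambda>_. {..<q})"

definition is_dist :: "'a set \<Rightarrow> ('a \<Rightarrow> real) \<Rightarrow> bool" where
  "is_dist A p \<longleftrightarrow> (\<forall>x\<in>A. 0 \<le> p x) \<and> sum p A = 1"

definition prod_dist :: "nat \<Rightarrow> (nat \<Rightarrow> nat \<Rightarrow> real) \<Rightarrow> (nat \<Rightarrow> nat) \<Rightarrow> real" where
  "prod_dist n Ps \<omega> = (\<Prod>i<n. Ps i (\<omega> i))"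

definition d_TV :: "'a set \<Rightarrow> ('a \<Rightarrow> real) \<Rightarrow> ('a \<Rightarrow> real) \<Rightarrow> real" where
  "d_TV A p r = (1/2) * (\<Sum>x\<in>A. \<bar>p x - r x\<bar>)"

definition greedy_coupling ::
  "nat \<Rightarrow> (nat \<Rightarrow> real) \<Rightarrow> (nat \<Rightarrow> real) \<Rightarrow> (nat \<Rightarrow> nat \<Rightarrow> real) \<Rightarrow> bool" where
  "greedy_coupling q p r c \<longleftrightarrow>
     (\<forall>a<q. \<forall>b<q. 0 \<le> c a b) \<and>
     (\<forall>a<q. (\<Sum>b<q. c a b) = p a) \<and>
     (\<forall>b<q. (\<Sum>a<q. c a b) = r b) \<and>
     (\<forall>a<q. c a a = min (p a) (r a))"

definition prod_coupling ::
  "nat \<Rightarrow> (nat \<Rightarrow> nat \<Rightarrow> nat \<Rightarrow> real) \<Rightarrow> (nat \<Rightarrow> nat) \<Rightarrow> (nat \<Rightarrow> nat) \<Rightarrow> real" where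
  "prod_coupling n Cs \<omega> \<omega>' = (\<Prod>i<n. Cs i (\<omega> i) (\<omega>' i))"

definition pr_neq :: "nat \<Rightarrow> nat \<Rightarrow> (nat \<Rightarrow> nat \<Rightarrow> nat \<Rightarrow> real) \<Rightarrow> real" where
  "pr_neq q n Cs = (\<Sum>\<omega>\<in>cube q n. \<Sum>\<omega>'\<in>cube q n - {\<omega>}. prod_coupling n Cs \<omega> \<omega>')"

definition pr_at_neq :: "nat \<Rightarrow> nat \<Rightarrow> (nat \<Rightarrow> nat \<Rightarrow> nat \<Rightarrow> real) \<Rightarrow> (nat \<Rightarrow> nat) \<Rightarrow> real" where
  "pr_at_neq q n Cs \<omega> = (\<Sum>\<omega>'\<in>cube q n - {\<omega>}. prod_coupling n Cs \<omega> \<omega>')"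

definition cond_pi :: "nat \<Rightarrow> nat \<Rightarrow> (nat \<Rightarrow> nat \<Rightarrow> nat \<Rightarrow> real) \<Rightarrow> (nat \<Rightarrow> nat) \<Rightarrow> real" where
  "cond_pi q n Cs \<omega> = pr_at_neq q n Cs \<omega> / pr_neq q n Cs"

definition estimator ::
  "nat \<Rightarrow> nat \<Rightarrow> (nat \<Rightarrow> nat \<Rightarrow> real) \<Rightarrow> (nat \<Rightarrow> nat \<Rightarrow> real) \<Rightarrow> (nat \<Rightarrow> nat \<Rightarrow> nat \<Rightarrow> real)
    \<Rightarrow> (nat \<Rightarrow> nat) \<Rightarrow> real" where
  "estimator q n Ps Qs Cs \<omega> =
     max 0 (prod_dist n Ps \<omega> - prod_dist n Qs \<omega>) / pr_at_neq q n Cs \<omega>"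

definition expect_f ::
  "nat \<Rightarrow> nat \<Rightarrow> (nat \<Rightarrow> nat \<Rightarrow> real) \<Rightarrow> (nat \<Rightarrow> nat \<Rightarrow> real) \<Rightarrow> (nat \<Rightarrow> nat \<Rightarrow> nat \<Rightarrow> real) \<Rightarrow> real" where
  "expect_f q n Ps Qs Cs =
     (\<Sum>\<omega>\<in>{\<omega>\<in>cube q n. cond_pi q n Cs \<omega> > 0}. cond_pi q n Cs \<omega> * estimator q n Ps Qs Cs \<omega>)"

end

theory Submission
  imports Defs
begin

text \<open>Since the coupling is greedy in every coordinate, Pr[X = \<omega> \<and> X = Y] is the product of
  the coordinate minima, so Pr[X = \<omega> \<and> X \<noteq> Y] = P \<omega> - \<Prod>_i min (P_i \<omega>_i) (Q_i \<omega>_i) \<ge> max 0 (P \<omega> - Q \<omega>).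
  Hence \<pi>(\<omega>) f(\<omega>) = max 0 (P \<omega> - Q \<omega>) / Pr[X \<noteq> Y], which sums to d_TV(P,Q) / Pr[X \<noteq> Y],
  while 0 \<le> f \<le> 1 pointwise. The upper bound 1 is the coupling inequality. For the lower bound,
  Pr[X \<noteq> Y] = 1 - \<Prod>_i (1 - d_TV(P_i,Q_i)) \<le> \<Sum>_i d_TV(P_i,Q_i) by the union bound, and each
  d_TV(P_i,Q_i) \<le> d_TV(P,Q) because projecting to a coordinate cannot increase total variation.\<close>

lemma sum_pos_part_eq_d_TV:
  fixes p r :: "'a \<Rightarrow> real"
  assumes "sum p A = 1" "sum r A = 1"
  shows "(\<Sum>x\<in>A. max 0 (p x - r x)) = d_TV A p r"
proof -
  have "(\<Sum>x\<in>A. max 0 (p x - r x)) = (\<Sum>x\<in>A. (p x - r x + \<bar>p x - r x\<bar>) / 2)"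
    by (intro sum.cong) (auto simp: max_def)
  also have "\<dots> = (sum p A - sum r A + (\<Sum>x\<in>A. \<bar>p x - r x\<bar>)) / 2"
    by (simp add: sum_divide_distrib[symmetric] sum.distrib sum_subtractf)
  finally show ?thesis using assms unfolding d_TV_def by simp
qed

lemma sum_min_eq_1_minus_d_TV:
  fixes p r :: "'a \<Rightarrow> real"
  assumes "sum p A = 1" "sum r A = 1"
  shows "(\<Sum>x\<in>A. min (p x) (r x)) = 1 - d_TV A p r"
proof -
  have "(\<Sum>x\<in>A. min (p x) (r x)) = (\<Sum>x\<in>A. (p x + r x - \<bar>p x - r x\<bar>) / 2)"
    by (intro sum.cong) (auto simp: min_def)
  also have "\<dots> = (sum p A + sum r A - (\<Sum>x\<in>A. \<bar>p x - r x\<bar>)) / 2"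
    by (simp add: sum_divide_distrib[symmetric] sum.distrib sum_subtractf)
  finally show ?thesis using assms unfolding d_TV_def by simp
qed

lemma d_TV_nonneg: "0 \<le> d_TV A p r"
  unfolding d_TV_def by (simp add: sum_nonneg)

lemma d_TV_le_1:
  assumes "is_dist A p" "is_dist A r"
  shows "d_TV A p r \<le> 1"
proof -
  have "0 \<le> (\<Sum>x\<in>A. min (p x) (r x))"
    using assms unfolding is_dist_def by (intro sum_nonneg) auto
  then show ?thesis
    using assms sum_min_eq_1_minus_d_TV[of p A r] unfolding is_dist_def by simp
qed

lemma d_TV_pos:
  assumes "finite A" "x \<in> A" "p x \<noteq> r x"
  shows "0 < d_TV A p r"
proof -
  have "\<bar>p x - r x\<bar> \<le> (\<Sum>y\<in>A. \<bar>p y - r y\<bar>)"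
    using assms by (intro member_le_sum) auto
  then show ?thesis using assms unfolding d_TV_def by simp
qed

lemma one_minus_prod_le_sum:
  fixes d :: "'a \<Rightarrow> real"
  assumes "finite I" "\<forall>i\<in>I. 0 \<le> d i \<and> d i \<le> 1"
  shows "1 - (\<Prod>i\<in>I. 1 - d i) \<le> (\<Sum>i\<in>I. d i)"
  using assms
proof (induction I rule: finite_induct)
  case empty
  then show ?case by simp
next
  case (insert x I)
  define p where "p = (\<Prod>i\<in>I. 1 - d i)"
  have "p \<le> 1" unfolding p_def using insert by (intro prod_le_1) auto
  then have "d x * p \<le> d x" using insert by (simp add: mult_left_le)
  moreover have "1 - p \<le> (\<Sum>i\<in>I. d i)" using insert unfolding p_def by auto
  ultimately show ?case using insert unfolding p_def by (simp add: algebra_simps)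
qed

lemma finite_cube: "finite (cube q n)"
  unfolding cube_def by (simp add: finite_PiE)

lemma cube_less: "\<omega> \<in> cube q n \<Longrightarrow> i < n \<Longrightarrow> \<omega> i < q"
  unfolding cube_def by auto

lemma sum_cube_prod:
  fixes g :: "nat \<Rightarrow> nat \<Rightarrow> 'a::comm_semiring_1"
  shows "(\<Sum>\<omega>\<in>cube q n. \<Prod>i<n. g i (\<omega> i)) = (\<Prod>i<n. \<Sum>a<q. g i a)"
  unfolding cube_def by (simp add: prod_sum_PiE)

lemma is_dist_prod_dist:
  assumes "\<forall>i<n. is_dist {..<q} (Ps i)"
  shows "is_dist (cube q n) (prod_dist n Ps)"
  using assms unfolding is_dist_def prod_dist_def
  by (auto simp: sum_cube_prod cube_less intro!: prod_nonneg prod.neutral)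

lemma sum_prod_dist_cylinder:
  assumes "\<forall>j<n. sum (Ps j) {..<q} = 1" "i < n" "S \<subseteq> {..<q}"
  shows "(\<Sum>\<omega>\<in>PiE {..<n} ((\<lambda>_. {..<q})(i := S)). prod_dist n Ps \<omega>) = sum (Ps i) S"
proof -
  have "(\<Sum>\<omega>\<in>PiE {..<n} ((\<lambda>_. {..<q})(i := S)). prod_dist n Ps \<omega>)
      = (\<Prod>j<n. \<Sum>a\<in>((\<lambda>_. {..<q})(i := S)) j. Ps j a)"
    unfolding prod_dist_def using assms(3)
    by (intro prod_sum_PiE[symmetric]) (auto simp: finite_subset)
  also have "\<dots> = sum (Ps i) S * (\<Prod>j\<in>{..<n} - {i}. \<Sum>a\<in>((\<lambda>_. {..<q})(i := S)) j. Ps j a)"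
    using assms(2) by (subst prod.remove[of _ i]) auto
  also have "(\<Prod>j\<in>{..<n} - {i}. \<Sum>a\<in>((\<lambda>_. {..<q})(i := S)) j. Ps j a) = 1"
    using assms(1) by (intro prod.neutral) auto
  finally show ?thesis by (simp only: mult_1_right)
qed

text \<open>Witnessed by the cylinder over the set where the i-th marginal of P exceeds that of Q.\<close>
lemma d_TV_marginal_le_d_TV_prod_dist:
  assumes P: "\<forall>j<n. is_dist {..<q} (Ps j)" and Q: "\<forall>j<n. is_dist {..<q} (Qs j)" and i: "i < n"
  shows "d_TV {..<q} (Ps i) (Qs i) \<le> d_TV (cube q n) (prod_dist n Ps) (prod_dist n Qs)"
proof -
  define S where "S = {a\<in>{..<q}. Qs i a < Ps i a}"
  define B where "B = PiE {..<n} ((\<lambda>_. {..<q})(i := S))"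
  have S: "S \<subseteq> {..<q}" unfolding S_def by auto
  have B: "B \<subseteq> cube q n" unfolding B_def cube_def using S by (intro PiE_mono) auto
  have sums: "\<forall>j<n. sum (Ps j) {..<q} = 1" "\<forall>j<n. sum (Qs j) {..<q} = 1"
    using P Q unfolding is_dist_def by auto
  have "d_TV {..<q} (Ps i) (Qs i) = (\<Sum>a<q. max 0 (Ps i a - Qs i a))"
    using sums i by (intro sum_pos_part_eq_d_TV[symmetric]) auto
  also have "\<dots> = (\<Sum>a\<in>S. Ps i a - Qs i a)"
    unfolding S_def by (subst sum.inter_filter) (auto intro: sum.cong)
  also have "\<dots> = (\<Sum>\<omega>\<in>B. prod_dist n Ps \<omega> - prod_dist n Qs \<omega>)"
    unfolding B_def using sum_prod_dist_cylinder[OF sums(1) i S] sum_prod_dist_cylinder[OF sums(2) i S]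
    by (simp add: sum_subtractf)
  also have "\<dots> \<le> (\<Sum>\<omega>\<in>B. max 0 (prod_dist n Ps \<omega> - prod_dist n Qs \<omega>))"
    by (intro sum_mono) auto
  also have "\<dots> \<le> (\<Sum>\<omega>\<in>cube q n. max 0 (prod_dist n Ps \<omega> - prod_dist n Qs \<omega>))"
    using B finite_cube by (intro sum_mono2) auto
  also have "\<dots> = d_TV (cube q n) (prod_dist n Ps) (prod_dist n Qs)"
    using is_dist_prod_dist[OF P] is_dist_prod_dist[OF Q] unfolding is_dist_def
    by (intro sum_pos_part_eq_d_TV) auto
  finally show ?thesis .
qed

locale greedy_product_coupling =
  fixes q n :: nat
    and Ps Qs :: "nat \<Rightarrow> nat \<Rightarrow> real"
    and Cs :: "nat \<Rightarrow> nat \<Rightarrow> nat \<Rightarrow> real"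
  assumes P_dist: "\<forall>i<n. is_dist {..<q} (Ps i)"
    and Q_dist: "\<forall>i<n. is_dist {..<q} (Qs i)"
    and greedy: "\<forall>i<n. greedy_coupling q (Ps i) (Qs i) (Cs i)"
begin

abbreviation P where "P \<equiv> prod_dist n Ps"
abbreviation Q where "Q \<equiv> prod_dist n Qs"

definition min_mass :: "(nat \<Rightarrow> nat) \<Rightarrow> real" where
  "min_mass \<omega> = (\<Prod>i<n. min (Ps i (\<omega> i)) (Qs i (\<omega> i)))"

lemma min_mass_le:
  assumes "\<omega> \<in> cube q n"
  shows "min_mass \<omega> \<le> P \<omega>" "min_mass \<omega> \<le> Q \<omega>"
  using assms P_dist Q_dist unfolding min_mass_def prod_dist_def is_dist_def
  by (auto intro!: prod_mono dest: cube_less)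

lemma pr_at_neq_eq:
  assumes \<omega>: "\<omega> \<in> cube q n"
  shows "pr_at_neq q n Cs \<omega> = P \<omega> - min_mass \<omega>"
proof -
  have "pr_at_neq q n Cs \<omega> = (\<Sum>\<omega>'\<in>cube q n. prod_coupling n Cs \<omega> \<omega>') - prod_coupling n Cs \<omega> \<omega>"
    unfolding pr_at_neq_def using \<omega> finite_cube by (simp add: sum_diff1)
  also have "(\<Sum>\<omega>'\<in>cube q n. prod_coupling n Cs \<omega> \<omega>') = (\<Prod>i<n. \<Sum>b<q. Cs i (\<omega> i) b)"
    unfolding prod_coupling_def by (rule sum_cube_prod)
  also have "\<dots> = P \<omega>"
    unfolding prod_dist_def using greedy \<omega> cube_less unfolding greedy_coupling_def
    by (intro prod.cong) auto
  also have "prod_coupling n Cs \<omega> \<omega> = min_mass \<omega>"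
    unfolding prod_coupling_def min_mass_def using greedy \<omega> cube_less unfolding greedy_coupling_def
    by (intro prod.cong) auto
  finally show ?thesis .
qed

lemma pos_part_le_pr_at_neq:
  "\<omega> \<in> cube q n \<Longrightarrow> max 0 (P \<omega> - Q \<omega>) \<le> pr_at_neq q n Cs \<omega>"
  using pr_at_neq_eq min_mass_le by force

lemma pr_neq_eq_prod:
  "pr_neq q n Cs = 1 - (\<Prod>i<n. 1 - d_TV {..<q} (Ps i) (Qs i))"
proof -
  have "pr_neq q n Cs = (\<Sum>\<omega>\<in>cube q n. P \<omega> - min_mass \<omega>)"
    unfolding pr_neq_def pr_at_neq_def[symmetric] by (simp add: pr_at_neq_eq)
  also have "\<dots> = 1 - (\<Sum>\<omega>\<in>cube q n. min_mass \<omega>)"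
    using is_dist_prod_dist[OF P_dist] unfolding is_dist_def by (simp add: sum_subtractf)
  also have "(\<Sum>\<omega>\<in>cube q n. min_mass \<omega>) = (\<Prod>i<n. \<Sum>a<q. min (Ps i a) (Qs i a))"
    unfolding min_mass_def by (rule sum_cube_prod)
  also have "\<dots> = (\<Prod>i<n. 1 - d_TV {..<q} (Ps i) (Qs i))"
    using P_dist Q_dist unfolding is_dist_def by (intro prod.cong sum_min_eq_1_minus_d_TV) auto
  finally show ?thesis .
qed

lemma d_TV_le_pr_neq: "d_TV (cube q n) P Q \<le> pr_neq q n Cs"
proof -
  have "d_TV (cube q n) P Q = (\<Sum>\<omega>\<in>cube q n. max 0 (P \<omega> - Q \<omega>))"
    using is_dist_prod_dist[OF P_dist] is_dist_prod_dist[OF Q_dist] unfolding is_dist_def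
    by (intro sum_pos_part_eq_d_TV[symmetric]) auto
  also have "\<dots> \<le> pr_neq q n Cs"
    unfolding pr_neq_def pr_at_neq_def[symmetric] by (intro sum_mono pos_part_le_pr_at_neq)
  finally show ?thesis .
qed

lemma pr_neq_le_n_d_TV: "pr_neq q n Cs \<le> real n * d_TV (cube q n) P Q"
proof -
  have "pr_neq q n Cs \<le> (\<Sum>i<n. d_TV {..<q} (Ps i) (Qs i))"
    unfolding pr_neq_eq_prod using P_dist Q_dist
    by (intro one_minus_prod_le_sum) (auto simp: d_TV_nonneg d_TV_le_1)
  also have "\<dots> \<le> (\<Sum>i<n. d_TV (cube q n) P Q)"
    using P_dist Q_dist by (intro sum_mono d_TV_marginal_le_d_TV_prod_dist) auto
  finally show ?thesis by simp
qed

lemma expect_f_eq: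
  assumes Z: "0 < pr_neq q n Cs"
  shows "expect_f q n Ps Qs Cs = d_TV (cube q n) P Q / pr_neq q n Cs"
proof -
  let ?Z = "pr_neq q n Cs" and ?A = "pr_at_neq q n Cs"
  let ?supp = "{\<omega>\<in>cube q n. 0 < cond_pi q n Cs \<omega>}"
  have "expect_f q n Ps Qs Cs = (\<Sum>\<omega>\<in>?supp. max 0 (P \<omega> - Q \<omega>) / ?Z)"
    unfolding expect_f_def cond_pi_def estimator_def by (intro sum.cong) auto
  also have "\<dots> = (\<Sum>\<omega>\<in>cube q n. max 0 (P \<omega> - Q \<omega>) / ?Z)"
  proof (intro sum.mono_neutral_left finite_cube ballI)
    fix \<omega> assume \<omega>: "\<omega> \<in> cube q n - ?supp"
    then have "?A \<omega> \<le> 0" using Z by (auto simp: cond_pi_def zero_less_divide_iff)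
    with pos_part_le_pr_at_neq[of \<omega>] \<omega> show "max 0 (P \<omega> - Q \<omega>) / ?Z = 0" by auto
  qed auto
  also have "\<dots> = d_TV (cube q n) P Q / ?Z"
    using is_dist_prod_dist[OF P_dist] is_dist_prod_dist[OF Q_dist] unfolding is_dist_def
    by (simp add: sum_divide_distrib[symmetric] sum_pos_part_eq_d_TV)
  finally show ?thesis .
qed

lemma estimator_bounds:
  assumes "\<omega> \<in> cube q n" "0 < cond_pi q n Cs \<omega>" "0 < pr_neq q n Cs"
  shows "0 \<le> estimator q n Ps Qs Cs \<omega> \<and> estimator q n Ps Qs Cs \<omega> \<le> 1"
proof -
  have "0 < pr_at_neq q n Cs \<omega>"
    using assms(2,3) by (auto simp: cond_pi_def zero_less_divide_iff)
  then show ?thesis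
    using pos_part_le_pr_at_neq[OF assms(1)] unfolding estimator_def by auto
qed

end

theorem lemma3p3:
  fixes q n :: nat
    and Ps Qs :: "nat \<Rightarrow> nat \<Rightarrow> real"
    and Cs :: "nat \<Rightarrow> nat \<Rightarrow> nat \<Rightarrow> real"
  assumes P_dist: "\<forall>i<n. is_dist {..<q} (Ps i)"
    and Q_dist: "\<forall>i<n. is_dist {..<q} (Qs i)"
    and P_ne_Q: "\<exists>\<omega>\<in>cube q n. prod_dist n Ps \<omega> \<noteq> prod_dist n Qs \<omega>"
    and greedy: "\<forall>i<n. greedy_coupling q (Ps i) (Qs i) (Cs i)"
  shows "expect_f q n Ps Qs Cs
           = d_TV (cube q n) (prod_dist n Ps) (prod_dist n Qs) / pr_neq q n Cs
       \<and> d_TV (cube q n) (prod_dist n Ps) (prod_dist n Qs) / pr_neq q n Cs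
           = d_TV (cube q n) (prod_dist n Ps) (prod_dist n Qs)
             / (1 - (\<Prod>i<n. 1 - d_TV {..<q} (Ps i) (Qs i)))
       \<and> 1 / real n \<le> expect_f q n Ps Qs Cs
       \<and> expect_f q n Ps Qs Cs \<le> 1
       \<and> (\<forall>\<omega>\<in>cube q n. cond_pi q n Cs \<omega> > 0 \<longrightarrow>
             0 \<le> estimator q n Ps Qs Cs \<omega> \<and> estimator q n Ps Qs Cs \<omega> \<le> 1)"
proof -
  interpret greedy_product_coupling q n Ps Qs Cs
    using P_dist Q_dist greedy by unfold_locales
  define D where "D = d_TV (cube q n) P Q"
  define Z where "Z = pr_neq q n Cs"
  obtain \<omega> where "\<omega> \<in> cube q n" "P \<omega> \<noteq> Q \<omega>" using P_ne_Q by blast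
  then have D: "0 < D" unfolding D_def by (intro d_TV_pos finite_cube)
  have DZ: "D \<le> Z" "Z \<le> real n * D"
    unfolding D_def Z_def by (rule d_TV_le_pr_neq, rule pr_neq_le_n_d_TV)
  have Z: "0 < Z" using D DZ(1) by linarith
  have "D / Z \<le> 1" using Z DZ(1) by simp
  moreover have "1 / real n \<le> D / Z"
    using D Z DZ(2) by (cases "n = 0") (simp_all add: field_simps mult.commute)
  ultimately show ?thesis
    using expect_f_eq[OF Z[unfolded Z_def]] estimator_bounds[OF _ _ Z[unfolded Z_def]]
      pr_neq_eq_prod
    unfolding D_def Z_def by simp
qed

end
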